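(* Suppose the Lipschitz assumption holds. Then for every $t\in\mathbb N_T$ there exists a constant $K^5_t>0$ such that for all $m_t\in\mathcal M_n$ and $z_t\in\Delta(\mathcal X)$, $$|V_t(m_t)-\hat V_t(z_t)|\le K^5_t\|m_t-z_t\|_\infty+\mathcal O(1/\sqrt n).$$
   Context: Fix $n\in\mathbb N$ agents, $T\in\mathbb N$, finite sets $\mathcal X,\mathcal U,\mathcal W$; $\mathbb N_k=\{1,\dots,k\}$; $\mathcal I(\mathcal X)=[0,1]^{\mathcal X}$; $\Delta(\mathcal X)$ the probability vectors on $\mathcal X$; $\mathcal M_n=\{m\in\Delta(\mathcal X):m(x)\in\{0,\tfrac1n,\dots,1\}\}$. Agent $i\in\mathbb N_n$ has state $x^i_t\in\mathcal X$ and action $u^i_t\in\mathcal U$; mean-field $m_t(x)=\frac1n\sum_i\mathbb 1(x^i_t=x)$; dynamics $x^i_{t+1}=f_t(x^i_t,u^i_t,w^i_t,m_t)$ with $f_t:\mathcal X\times\mathcal U\times\mathcal W\times\mathcal I(\mathcal X)\to\mathcal X$; for each $t$ the noises $w^1_t,\dots,w^n_t$ are i.i.d. with law $\mathbb P(w_t=\cdot)$, independent of everything up to time $t$. $\mathbb P(y|x,u,z)=\sum_w\mathbb 1(f_t(x,u,w,z)=y)\mathbb P(w_t=w)$; costs $\ell_t:\mathcal X\times\mathcal U\times\mathcal I(\mathcal X)\to\mathbb R_{\ge0}$. Lipschitz assumption: constants $K^1_t,K^2_t>0$ with $|\mathbb P(y|x,u,z_1)-\mathbb P(y|x,u,z_2)|\le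 K^1_t\|z_1-z_2\|_\infty$, $|\ell_t(x,u,z_1)-\ell_t(x,u,z_2)|\le K^2_t\|z_1-z_2\|_\infty$ for all $x,y,u$, $z_1,z_2\in\mathcal I(\mathcal X)$. $\mathcal G$ is the set of maps $\gamma:\mathcal X\to\mathcal U$; $\hat f_t(z,\gamma)(y)=\sum_x z(x)\mathbb P(y|x,\gamma(x),z)$; $\hat c_t(z,\gamma)=\sum_x z(x)\ell_t(x,\gamma(x),z)$. Deterministic value functions $\hat V_t:\Delta(\mathcal X)\to\mathbb R$: $\hat V_{T+1}\equiv0$, $\hat V_t(z)=\min_{\gamma\in\mathcal G}\big(\hat c_t(z,\gamma)+\hat V_{t+1}(\hat f_t(z,\gamma))\big)$. Mean-field sharing value functions $V_t:\mathcal M_n\to\mathbb R$: $V_{T+1}\equiv0$, $V_t(m)=\min_{\gamma\in\mathcal G}\big(\hat c_t(m,\gamma)+\mathbb E[V_{t+1}(m_{t+1})\mid m_t=m,\gamma_t=\gamma]\big)$, where the conditional expectation is with respect to the law of the empirical distribution $m_{t+1}$ at time $t+1$ when the empirical distribution at time $t$ is $m$ and every agent uses $u^i_t=\gamma(x^i_t)$. Model data do not depend on $n$; $\mathcal O(1/\sqrt n)$ denotes a quantity bounded by $C/\sqrt n$ with $C$ independent of $n$, $m_t$, $z_t$. *)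

theory Defs
  imports "HOL-Analysis.Analysis"
begin

text \<open>Model: states 'x, actions 'u, noises 'w are finite types. Times are natural numbers.
  Model data: dynamics f, noise laws pw (pw t w = P(w_t = w)), costs ell.\<close>

definition Ispace :: "('x::finite \<Rightarrow> real) set" where
  "Ispace = {z. \<forall>x. 0 \<le> z x \<and> z x \<le> 1}"

definition Delta :: "('x::finite \<Rightarrow> real) set" where
  "Delta = {z. (\<forall>x. 0 \<le> z x) \<and> sum z UNIV = 1}"

definition Mn :: "nat \<Rightarrow> ('x::finite \<Rightarrow> real) set" where
  "Mn n = {m. m \<in> Delta \<and> (\<forall>x. \<exists>k::nat. k \<le> n \<and> m x = real k / real n)}"

definition supn :: "('x::finite \<Rightarrow> real) \<Rightarrow> real" where
  "supn z = Max (range (\<lambda>x. \<bar>z x\<bar>))"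

definition emp :: "nat \<Rightarrow> (nat \<Rightarrow> 'x::finite) \<Rightarrow> ('x \<Rightarrow> real)" where
  "emp n s = (\<lambda>x. real (card {i\<in>{0..<n}. s i = x}) / real n)"

definition Ptrans ::
  "(nat \<Rightarrow> 'x::finite \<Rightarrow> 'u \<Rightarrow> 'w::finite \<Rightarrow> ('x \<Rightarrow> real) \<Rightarrow> 'x) \<Rightarrow> (nat \<Rightarrow> 'w \<Rightarrow> real)
    \<Rightarrow> nat \<Rightarrow> 'x \<Rightarrow> 'u \<Rightarrow> ('x \<Rightarrow> real) \<Rightarrow> 'x \<Rightarrow> real" where
  "Ptrans f pw t x u z y = (\<Sum>w\<in>UNIV. (if f t x u w z = y then 1 else 0) * pw t w)"

definition fhat ::
  "(nat \<Rightarrow> 'x::finite \<Rightarrow> 'u \<Rightarrow> 'w::finite \<Rightarrow> ('x \<Rightarrow> real) \<Rightarrow> 'x) \<Rightarrow> (nat \<Rightarrow> 'w \<Rightarrow> real)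
    \<Rightarrow> nat \<Rightarrow> ('x \<Rightarrow> real) \<Rightarrow> ('x \<Rightarrow> 'u) \<Rightarrow> ('x \<Rightarrow> real)" where
  "fhat f pw t z \<gamma> = (\<lambda>y. \<Sum>x\<in>UNIV. z x * Ptrans f pw t x (\<gamma> x) z y)"

definition chat ::
  "(nat \<Rightarrow> 'x::finite \<Rightarrow> 'u \<Rightarrow> ('x \<Rightarrow> real) \<Rightarrow> real) \<Rightarrow> nat \<Rightarrow> ('x \<Rightarrow> real) \<Rightarrow> ('x \<Rightarrow> 'u) \<Rightarrow> real" where
  "chat ell t z \<gamma> = (\<Sum>x\<in>UNIV. z x * ell t x (\<gamma> x) z)"

fun VhatR ::
  "(nat \<Rightarrow> 'x::finite \<Rightarrow> 'u::finite \<Rightarrow> 'w::finite \<Rightarrow> ('x \<Rightarrow> real) \<Rightarrow> 'x) \<Rightarrow> (nat \<Rightarrow> 'w \<Rightarrow> real)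
    \<Rightarrow> (nat \<Rightarrow> 'x \<Rightarrow> 'u \<Rightarrow> ('x \<Rightarrow> real) \<Rightarrow> real) \<Rightarrow> nat \<Rightarrow> nat \<Rightarrow> ('x \<Rightarrow> real) \<Rightarrow> real" where
  "VhatR f pw ell 0 t z = 0"
| "VhatR f pw ell (Suc k) t z =
     Min (range (\<lambda>\<gamma>. chat ell t z \<gamma> + VhatR f pw ell k (Suc t) (fhat f pw t z \<gamma>)))"

text \<open>hat V_t for horizon T: hat V_{T+1} = 0, and T+1-t stages remain at time t \<le> T.\<close>
definition Vhat ::
  "(nat \<Rightarrow> 'x::finite \<Rightarrow> 'u::finite \<Rightarrow> 'w::finite \<Rightarrow> ('x \<Rightarrow> real) \<Rightarrow> 'x) \<Rightarrow> (nat \<Rightarrow> 'w \<Rightarrow> real)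
    \<Rightarrow> (nat \<Rightarrow> 'x \<Rightarrow> 'u \<Rightarrow> ('x \<Rightarrow> real) \<Rightarrow> real) \<Rightarrow> nat \<Rightarrow> nat \<Rightarrow> ('x \<Rightarrow> real) \<Rightarrow> real" where
  "Vhat f pw ell T t z = VhatR f pw ell (Suc T - t) t z"

text \<open>A labelling of the n agents' states realising the empirical distribution m
  (the law of m_{t+1} does not depend on which one, by exchangeability).\<close>
definition states_of :: "nat \<Rightarrow> ('x::finite \<Rightarrow> real) \<Rightarrow> (nat \<Rightarrow> 'x)" where
  "states_of n m = (SOME s. emp n s = m)"

text \<open>E[ g(m_{t+1}) | m_t = m, gamma_t = gamma ] for n agents: i.i.d. noises w^1..w^n with law pw t,
  x^i_{t+1} = f t x^i (gamma x^i) w^i m.\<close>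
definition Enext ::
  "(nat \<Rightarrow> 'x::finite \<Rightarrow> 'u \<Rightarrow> 'w::finite \<Rightarrow> ('x \<Rightarrow> real) \<Rightarrow> 'x) \<Rightarrow> (nat \<Rightarrow> 'w \<Rightarrow> real)
    \<Rightarrow> nat \<Rightarrow> nat \<Rightarrow> ('x \<Rightarrow> real) \<Rightarrow> ('x \<Rightarrow> 'u) \<Rightarrow> (('x \<Rightarrow> real) \<Rightarrow> real) \<Rightarrow> real" where
  "Enext f pw n t m \<gamma> g =
     (let s = states_of n m in
      \<Sum>w\<in>({0..<n} \<rightarrow>\<^sub>E (UNIV::'w set)).
        (\<Prod>i\<in>{0..<n}. pw t (w i)) * g (emp n (\<lambda>i. f t (s i) (\<gamma> (s i)) (w i) m)))"

fun VR ::
  "(nat \<Rightarrow> 'x::finite \<Rightarrow> 'u::finite \<Rightarrow> 'w::finite \<Rightarrow> ('x \<Rightarrow> real) \<Rightarrow> 'x) \<Rightarrow> (nat \<Rightarrow> 'w \<Rightarrow> real)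
    \<Rightarrow> (nat \<Rightarrow> 'x \<Rightarrow> 'u \<Rightarrow> ('x \<Rightarrow> real) \<Rightarrow> real) \<Rightarrow> nat \<Rightarrow> nat \<Rightarrow> nat \<Rightarrow> ('x \<Rightarrow> real) \<Rightarrow> real" where
  "VR f pw ell n 0 t m = 0"
| "VR f pw ell n (Suc k) t m =
     Min (range (\<lambda>\<gamma>. chat ell t m \<gamma> + Enext f pw n t m \<gamma> (VR f pw ell n k (Suc t))))"

definition Vmf ::
  "(nat \<Rightarrow> 'x::finite \<Rightarrow> 'u::finite \<Rightarrow> 'w::finite \<Rightarrow> ('x \<Rightarrow> real) \<Rightarrow> 'x) \<Rightarrow> (nat \<Rightarrow> 'w \<Rightarrow> real)
    \<Rightarrow> (nat \<Rightarrow> 'x \<Rightarrow> 'u \<Rightarrow> ('x \<Rightarrow> real) \<Rightarrow> real) \<Rightarrow> nat \<Rightarrow> nat \<Rightarrow> nat \<Rightarrow> ('x \<Rightarrow> real) \<Rightarrow> real" where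
  "Vmf f pw ell T n t m = VR f pw ell n (Suc T - t) t m"

end

theory Submission
  imports Defs "HOL-Library.Multiset"
begin

(*
  Split |V_t(m) - hat V_t(z)| <= |V_t(m) - hat V_t(m)| + |hat V_t(m) - hat V_t(z)|.

  Second term: hat f_t and hat c_t are Lipschitz in z uniformly over the finitely many
  policies gamma, and a minimum over gamma preserves such a bound, so by backward induction
  every hat V_t is Lipschitz on Delta(X) for the sup norm.

  First term: given m_t = m and gamma, n (m_{t+1}(y) - hat f_t(m, gamma)(y)) is a sum of n
  independent centred indicators, so its second moment is at most n and
  E ||m_{t+1} - hat f_t(m, gamma)||_inf <= |X| / sqrt n.  Together with the Lipschitz bound on
  hat V_{t+1} and the error C_{t+1} / sqrt n of the induction hypothesis this gives
  |V_t - hat V_t| <= C_t / sqrt n on M_n, again by backward induction.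
*)

lemma abs_le_supn: "\<bar>z x\<bar> \<le> supn z"
  unfolding supn_def by (rule Max_ge) auto

lemma supn_nonneg: "0 \<le> supn z"
  using abs_le_supn[of z undefined] by linarith

lemma supn_leI: "(\<And>x. \<bar>z x\<bar> \<le> c) \<Longrightarrow> supn z \<le> c"
  unfolding supn_def by (subst Max_le_iff) auto

lemma supn_le_sum_abs: "supn z \<le> (\<Sum>x\<in>UNIV. \<bar>z x\<bar>)"
  by (rule supn_leI, rule member_le_sum) auto

lemma Delta_subset_Ispace: "Delta \<subseteq> Ispace"
proof
  fix z :: "'x::finite \<Rightarrow> real"
  assume "z \<in> Delta"
  then have "0 \<le> z x \<and> z x \<le> 1" for x
    using member_le_sum[of x UNIV z] unfolding Delta_def by auto
  then show "z \<in> Ispace"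
    unfolding Ispace_def by auto
qed

lemma Mn_subset_Delta: "Mn n \<subseteq> Delta"
  unfolding Mn_def by auto

section \<open>Expectations under i.i.d. noise\<close>

definition iid_expect :: "('w::finite \<Rightarrow> real) \<Rightarrow> 'i set \<Rightarrow> (('i \<Rightarrow> 'w) \<Rightarrow> real) \<Rightarrow> real" where
  "iid_expect p I g = (\<Sum>w\<in>I \<rightarrow>\<^sub>E UNIV. (\<Prod>i\<in>I. p (w i)) * g w)"

lemma iid_expect_prod:
  assumes "finite I"
  shows "iid_expect p I (\<lambda>w. \<Prod>i\<in>I. h i (w i)) = (\<Prod>i\<in>I. \<Sum>v\<in>UNIV. p v * h i v)"
proof -
  have "(\<Prod>i\<in>I. \<Sum>v\<in>UNIV. p v * h i v) = (\<Sum>w\<in>I \<rightarrow>\<^sub>E UNIV. \<Prod>i\<in>I. p (w i) * h i (w i))"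
    by (rule prod_sum_PiE) (use assms in auto)
  then show ?thesis
    unfolding iid_expect_def by (simp add: prod.distrib)
qed

lemma iid_expect_prod_subset:
  assumes "finite I" "sum p UNIV = 1" "J \<subseteq> I"
  shows "iid_expect p I (\<lambda>w. \<Prod>j\<in>J. h j (w j)) = (\<Prod>j\<in>J. \<Sum>v\<in>UNIV. p v * h j v)"
proof -
  define h' where "h' i v = (if i \<in> J then h i v else 1)" for i v
  have "(\<Prod>j\<in>J. h j (w j)) = (\<Prod>i\<in>I. h' i (w i))" for w
    by (rule prod.mono_neutral_cong_left) (use assms in \<open>auto simp: h'_def\<close>)
  then have "iid_expect p I (\<lambda>w. \<Prod>j\<in>J. h j (w j)) = (\<Prod>i\<in>I. \<Sum>v\<in>UNIV. p v * h' i v)"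
    using iid_expect_prod[OF assms(1)] by simp
  also have "\<dots> = (\<Prod>j\<in>J. \<Sum>v\<in>UNIV. p v * h j v)"
    by (rule prod.mono_neutral_cong_right) (use assms in \<open>auto simp: h'_def\<close>)
  finally show ?thesis .
qed

lemma iid_expect_add: "iid_expect p I (\<lambda>w. f w + g w) = iid_expect p I f + iid_expect p I g"
  unfolding iid_expect_def by (simp add: distrib_left sum.distrib)

lemma iid_expect_diff: "iid_expect p I (\<lambda>w. f w - g w) = iid_expect p I f - iid_expect p I g"
  unfolding iid_expect_def by (simp add: right_diff_distrib sum_subtractf)

lemma iid_expect_cmult: "iid_expect p I (\<lambda>w. c * f w) = c * iid_expect p I f"
  unfolding iid_expect_def by (simp add: sum_distrib_left algebra_simps)

lemma iid_expect_sum: "iid_expect p I (\<lambda>w. \<Sum>y\<in>Y. g y w) = (\<Sum>y\<in>Y. iid_expect p I (g y))"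
  unfolding iid_expect_def by (simp add: sum_distrib_left sum.swap[of _ Y])

lemma iid_expect_const:
  assumes "finite I" "sum p UNIV = 1"
  shows "iid_expect p I (\<lambda>_. c) = c"
  using iid_expect_prod_subset[OF assms, of "{}"] iid_expect_cmult[of p I c "\<lambda>_. 1"] by simp

lemma iid_expect_mono:
  assumes "\<forall>v. 0 \<le> p v" "\<And>w. f w \<le> g w"
  shows "iid_expect p I f \<le> iid_expect p I g"
  unfolding iid_expect_def
  by (intro sum_mono mult_left_mono) (use assms in \<open>auto intro: prod_nonneg\<close>)

lemma iid_expect_nonneg:
  assumes "\<forall>v. 0 \<le> p v" "\<And>w. 0 \<le> g w"
  shows "0 \<le> iid_expect p I g"
  using iid_expect_mono[OF assms(1), of "\<lambda>_. 0" g I] assms(2) by (simp add: iid_expect_def)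

lemma abs_iid_expect_le:
  assumes "\<forall>v. 0 \<le> p v"
  shows "\<bar>iid_expect p I f\<bar> \<le> iid_expect p I (\<lambda>w. \<bar>f w\<bar>)"
proof -
  have "iid_expect p I f \<le> iid_expect p I (\<lambda>w. \<bar>f w\<bar>)"
    by (rule iid_expect_mono) (use assms in auto)
  moreover have "iid_expect p I (\<lambda>w. - 1 * f w) \<le> iid_expect p I (\<lambda>w. \<bar>f w\<bar>)"
    by (rule iid_expect_mono) (use assms in auto)
  ultimately show ?thesis
    unfolding iid_expect_cmult by linarith
qed

lemma iid_expect_sum_sq:
  fixes Y :: "'i \<Rightarrow> 'w::finite \<Rightarrow> real"
  assumes fin: "finite I" and p1: "sum p UNIV = 1"
    and centred: "\<And>i. i \<in> I \<Longrightarrow> (\<Sum>v\<in>UNIV. p v * Y i v) = 0"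
  shows "iid_expect p I (\<lambda>w. (\<Sum>i\<in>I. Y i (w i))\<^sup>2) = (\<Sum>i\<in>I. \<Sum>v\<in>UNIV. p v * (Y i v)\<^sup>2)"
proof -
  have cross: "iid_expect p I (\<lambda>w. Y i (w i) * Y j (w j))
      = (if i = j then (\<Sum>v\<in>UNIV. p v * (Y i v)\<^sup>2) else 0)"
    if "i \<in> I" "j \<in> I" for i j
  proof (cases "i = j")
    case True
    then show ?thesis
      using iid_expect_prod_subset[OF fin p1, of "{i}" "\<lambda>_ v. (Y i v)\<^sup>2"] that
      by (simp add: power2_eq_square)
  next
    case False
    then show ?thesis
      using iid_expect_prod_subset[OF fin p1, of "{i, j}" Y] that centred by simp
  qed
  have "iid_expect p I (\<lambda>w. (\<Sum>i\<in>I. Y i (w i))\<^sup>2)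
      = (\<Sum>i\<in>I. \<Sum>j\<in>I. iid_expect p I (\<lambda>w. Y i (w i) * Y j (w j)))"
    by (simp add: power2_eq_square sum_product iid_expect_sum)
  also have "\<dots> = (\<Sum>i\<in>I. \<Sum>v\<in>UNIV. p v * (Y i v)\<^sup>2)"
    using fin by (simp add: cross cong: sum.cong)
  finally show ?thesis .
qed

lemma iid_expect_abs_le_sqrt:
  assumes p0: "\<forall>v. 0 \<le> p v" and p1: "sum p UNIV = 1" and fin: "finite I"
  shows "iid_expect p I (\<lambda>w. \<bar>X w\<bar>) \<le> sqrt (iid_expect p I (\<lambda>w. (X w)\<^sup>2))"
proof -
  define e where "e = iid_expect p I (\<lambda>w. \<bar>X w\<bar>)"
  have "0 \<le> e"
    unfolding e_def by (rule iid_expect_nonneg) (use p0 in auto)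
  have "(\<lambda>w. (\<bar>X w\<bar> - e)\<^sup>2) = (\<lambda>w. ((X w)\<^sup>2 - (2 * e) * \<bar>X w\<bar>) + e\<^sup>2)"
    by (auto simp: power2_eq_square algebra_simps)
  then have "iid_expect p I (\<lambda>w. (\<bar>X w\<bar> - e)\<^sup>2) = iid_expect p I (\<lambda>w. (X w)\<^sup>2) - e\<^sup>2"
    by (simp only: iid_expect_add iid_expect_diff iid_expect_cmult iid_expect_const[OF fin p1]
        e_def[symmetric] power2_eq_square)
  moreover have "0 \<le> iid_expect p I (\<lambda>w. (\<bar>X w\<bar> - e)\<^sup>2)"
    by (rule iid_expect_nonneg) (use p0 in auto)
  ultimately show ?thesis
    using \<open>0 \<le> e\<close> real_le_rsqrt unfolding e_def[symmetric] by simp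
qed

lemma iid_expect_abs_centred_sum_le_sqrt_card:
  fixes a :: "'i \<Rightarrow> 'w::finite \<Rightarrow> real"
  assumes p0: "\<forall>v. 0 \<le> p v" and p1: "sum p UNIV = 1" and fin: "finite I"
    and a01: "\<And>i v. 0 \<le> a i v \<and> a i v \<le> 1"
  shows "iid_expect p I (\<lambda>w. \<bar>\<Sum>i\<in>I. a i (w i) - (\<Sum>v\<in>UNIV. p v * a i v)\<bar>) \<le> sqrt (real (card I))"
proof -
  define Y where "Y i v = a i v - (\<Sum>v'\<in>UNIV. p v' * a i v')" for i v
  have "(\<Sum>v\<in>UNIV. p v * a i v) \<le> (\<Sum>v\<in>UNIV. p v * 1)" for i
    by (intro sum_mono mult_left_mono) (use p0 a01 in auto)
  then have mean_le: "(\<Sum>v\<in>UNIV. p v * a i v) \<le> 1" for i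
    using p1 by simp
  have mean_ge: "0 \<le> (\<Sum>v\<in>UNIV. p v * a i v)" for i
    by (intro sum_nonneg mult_nonneg_nonneg) (use p0 a01 in auto)
  have "\<bar>Y i v\<bar> \<le> 1" for i v
    using a01[of i v] mean_le[of i] mean_ge[of i] unfolding Y_def abs_le_iff by linarith
  then have Y_sq: "(Y i v)\<^sup>2 \<le> 1" for i v
    by (simp add: abs_square_le_1)
  have centred: "(\<Sum>v\<in>UNIV. p v * Y i v) = 0" for i
    unfolding Y_def by (simp add: right_diff_distrib sum_subtractf sum_distrib_right[symmetric] p1)
  have "iid_expect p I (\<lambda>w. \<bar>\<Sum>i\<in>I. Y i (w i)\<bar>) \<le> sqrt (iid_expect p I (\<lambda>w. (\<Sum>i\<in>I. Y i (w i))\<^sup>2))"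
    by (rule iid_expect_abs_le_sqrt[OF p0 p1 fin])
  also have "\<dots> = sqrt (\<Sum>i\<in>I. \<Sum>v\<in>UNIV. p v * (Y i v)\<^sup>2)"
    by (simp only: iid_expect_sum_sq[OF fin p1 centred])
  also have "\<dots> \<le> sqrt (\<Sum>i\<in>I. \<Sum>v\<in>UNIV. p v * 1)"
    by (intro real_sqrt_le_mono sum_mono mult_left_mono) (use p0 Y_sq in auto)
  finally show ?thesis
    unfolding Y_def using p1 by simp
qed

section \<open>Empirical distributions\<close>

lemma sum_agents_eq_emp:
  fixes s :: "nat \<Rightarrow> 'x::finite" and g :: "'x \<Rightarrow> real"
  assumes "0 < n"
  shows "(\<Sum>i\<in>{0..<n}. g (s i)) = real n * (\<Sum>x\<in>UNIV. emp n s x * g x)"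
proof -
  have "(\<Sum>i\<in>{0..<n}. g (s i)) = (\<Sum>x\<in>UNIV. \<Sum>i\<in>{i\<in>{0..<n}. s i = x}. g (s i))"
    by (rule sum.group[symmetric]) auto
  also have "\<dots> = (\<Sum>x\<in>UNIV. real (card {i\<in>{0..<n}. s i = x}) * g x)"
    by (rule sum.cong) auto
  also have "\<dots> = real n * (\<Sum>x\<in>UNIV. emp n s x * g x)"
    unfolding emp_def sum_distrib_left using assms by (intro sum.cong) auto
  finally show ?thesis .
qed

lemma emp_in_Mn:
  fixes s :: "nat \<Rightarrow> 'x::finite"
  assumes "0 < n"
  shows "emp n s \<in> Mn n"
proof -
  have "sum (emp n s) UNIV = 1"
    using sum_agents_eq_emp[OF assms, of "\<lambda>_. 1" s] assms by simp
  moreover have "card {i\<in>{0..<n}. s i = x} \<le> card {0..<n}" for x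
    by (rule card_mono) auto
  ultimately show ?thesis
    unfolding Mn_def Delta_def by (auto simp: emp_def)
qed

lemma ex_states_emp_eq:
  fixes m :: "'x::finite \<Rightarrow> real"
  assumes n: "0 < n" and m: "m \<in> Mn n"
  shows "\<exists>s. emp n s = m"
proof -
  have "\<forall>x. \<exists>j::nat. m x = real j / real n"
    using m unfolding Mn_def by blast
  then obtain k where k: "\<And>x. m x = real (k x) / real n"
    by metis
  have "(\<Sum>x\<in>UNIV. real (k x)) / real n = 1"
    using m unfolding Mn_def Delta_def by (simp add: k sum_divide_distrib)
  then have sum_k: "(\<Sum>x\<in>UNIV. k x) = n"
    using n by (simp flip: of_nat_sum)
  obtain xs where xs: "mset xs = (\<Sum>x\<in>UNIV. replicate_mset (k x) x)"
    using ex_mset by blast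
  have count_xs: "count_list xs x = k x" for x
    using arg_cong[OF xs, of "\<lambda>M. count M x"] by (simp add: count_mset count_sum)
  have "length xs = n"
    using sum_count_set[of xs UNIV] sum_k by (simp add: count_xs)
  then have "{i\<in>{0..<n}. xs ! i = x} = {i. i < length xs \<and> x = xs ! i}" for x
    by auto
  then have "card {i\<in>{0..<n}. xs ! i = x} = count_list xs x" for x
    by (simp add: count_list_eq_length_filter length_filter_conv_card)
  then have "card {i\<in>{0..<n}. xs ! i = x} = k x" for x
    by (simp add: count_xs)
  then have "emp n (\<lambda>i. xs ! i) = m"
    by (simp add: emp_def k fun_eq_iff)
  then show ?thesis
    by blast
qed

lemma emp_states_of:
  fixes m :: "'x::finite \<Rightarrow> real"
  assumes "0 < n" "m \<in> Mn n"
  shows "emp n (states_of n m) = m"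
  unfolding states_of_def using ex_states_emp_eq[OF assms] by (rule someI_ex)

section \<open>One-step estimates\<close>

lemma Ptrans_nonneg:
  assumes "\<forall>w. 0 \<le> pw t w"
  shows "0 \<le> Ptrans f pw t x u z y"
  unfolding Ptrans_def using assms by (auto intro: sum_nonneg)

lemma Ptrans_le_1:
  assumes "\<forall>w. 0 \<le> pw t w" "sum (pw t) UNIV = 1"
  shows "Ptrans f pw t x u z y \<le> 1"
proof -
  have "Ptrans f pw t x u z y \<le> (\<Sum>w\<in>UNIV. 1 * pw t w)"
    unfolding Ptrans_def by (intro sum_mono mult_right_mono) (use assms in auto)
  then show ?thesis
    using assms(2) by simp
qed

lemma sum_Ptrans:
  assumes "sum (pw t) UNIV = 1"
  shows "(\<Sum>y\<in>UNIV. Ptrans f pw t x u z y) = 1"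
proof -
  have "(\<Sum>y\<in>UNIV. Ptrans f pw t x u z y)
      = (\<Sum>w\<in>UNIV. \<Sum>y\<in>UNIV. (if f t x u w z = y then 1 else 0) * pw t w)"
    unfolding Ptrans_def by (rule sum.swap)
  also have "\<dots> = (\<Sum>w\<in>UNIV. pw t w)"
    by (rule sum.cong) (simp_all add: sum.delta' flip: sum_distrib_right)
  finally show ?thesis
    using assms by simp
qed

lemma fhat_in_Delta:
  assumes "\<forall>w. 0 \<le> pw t w" "sum (pw t) UNIV = 1" "z \<in> Delta"
  shows "fhat f pw t z \<gamma> \<in> Delta"
proof -
  have z: "\<forall>x. 0 \<le> z x" "sum z UNIV = 1"
    using assms(3) unfolding Delta_def by auto
  have "sum (fhat f pw t z \<gamma>) UNIV = (\<Sum>x\<in>UNIV. z x * (\<Sum>y\<in>UNIV. Ptrans f pw t x (\<gamma> x) z y))"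
    unfolding fhat_def by (subst sum.swap) (simp add: sum_distrib_left)
  also have "\<dots> = 1"
    using z(2) by (simp add: sum_Ptrans[of pw t, OF assms(2)])
  finally show ?thesis
    using z(1) Ptrans_nonneg[of pw t, OF assms(1)] unfolding Delta_def fhat_def
    by (auto intro!: sum_nonneg mult_nonneg_nonneg)
qed

lemma abs_weighted_sum_diff_le:
  fixes z1 z2 :: "'x::finite \<Rightarrow> real"
  assumes z2: "z2 \<in> Delta" and bound: "\<And>x. \<bar>g1 x\<bar> \<le> B" and close: "\<And>x. \<bar>g1 x - g2 x\<bar> \<le> D"
  shows "\<bar>(\<Sum>x\<in>UNIV. z1 x * g1 x) - (\<Sum>x\<in>UNIV. z2 x * g2 x)\<bar>
    \<le> real CARD('x) * supn (\<lambda>x. z1 x - z2 x) * B + D"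
proof -
  define d where "d = supn (\<lambda>x. z1 x - z2 x)"
  have "(\<Sum>x\<in>UNIV. z1 x * g1 x) - (\<Sum>x\<in>UNIV. z2 x * g2 x)
      = (\<Sum>x\<in>UNIV. (z1 x - z2 x) * g1 x) + (\<Sum>x\<in>UNIV. z2 x * (g1 x - g2 x))"
    by (simp add: sum_subtractf[symmetric] sum.distrib[symmetric] algebra_simps)
  moreover have "\<bar>\<Sum>x\<in>UNIV. (z1 x - z2 x) * g1 x\<bar> \<le> (\<Sum>x\<in>(UNIV::'x set). d * B)"
  proof (rule order_trans[OF sum_abs sum_mono])
    fix x
    show "\<bar>(z1 x - z2 x) * g1 x\<bar> \<le> d * B"
      unfolding abs_mult d_def
      by (intro mult_mono abs_le_supn[of "\<lambda>x. z1 x - z2 x" x, simplified] bound supn_nonneg abs_ge_zero)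
  qed
  moreover have "\<bar>\<Sum>x\<in>UNIV. z2 x * (g1 x - g2 x)\<bar> \<le> (\<Sum>x\<in>UNIV. z2 x * D)"
  proof (rule order_trans[OF sum_abs sum_mono])
    fix x
    show "\<bar>z2 x * (g1 x - g2 x)\<bar> \<le> z2 x * D"
      using z2 close[of x] unfolding Delta_def by (simp add: abs_mult mult_left_mono)
  qed
  moreover have "(\<Sum>x\<in>UNIV. z2 x * D) = D"
    using z2 unfolding Delta_def by (simp add: sum_distrib_right[symmetric])
  ultimately show ?thesis
    unfolding d_def by (simp add: mult.assoc)
qed

lemma supn_fhat_diff_le:
  fixes f :: "nat \<Rightarrow> 'x::finite \<Rightarrow> 'u \<Rightarrow> 'w::finite \<Rightarrow> ('x \<Rightarrow> real) \<Rightarrow> 'x"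
  assumes p0: "\<forall>w. 0 \<le> pw t w" and p1: "sum (pw t) UNIV = 1" and z2: "z2 \<in> Delta"
    and lip: "\<And>x u y. \<bar>Ptrans f pw t x u z1 y - Ptrans f pw t x u z2 y\<bar> \<le> K * supn (\<lambda>v. z1 v - z2 v)"
  shows "supn (\<lambda>y. fhat f pw t z1 \<gamma> y - fhat f pw t z2 \<gamma> y)
    \<le> (real CARD('x) + K) * supn (\<lambda>v. z1 v - z2 v)"
proof (rule supn_leI)
  fix y
  have "\<bar>Ptrans f pw t x (\<gamma> x) z1 y\<bar> \<le> 1" for x
    using Ptrans_nonneg[of pw t f x "\<gamma> x" z1 y] Ptrans_le_1[of pw t f x "\<gamma> x" z1 y] p0 p1 by simp
  then show "\<bar>fhat f pw t z1 \<gamma> y - fhat f pw t z2 \<gamma> y\<bar> \<le> (real CARD('x) + K) * supn (\<lambda>v. z1 v - z2 v)"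
    using abs_weighted_sum_diff_le[OF z2, of "\<lambda>x. Ptrans f pw t x (\<gamma> x) z1 y" 1
        "\<lambda>x. Ptrans f pw t x (\<gamma> x) z2 y"] lip
    unfolding fhat_def by (simp add: algebra_simps)
qed

lemma abs_chat_diff_le:
  fixes ell :: "nat \<Rightarrow> 'x::finite \<Rightarrow> 'u \<Rightarrow> ('x \<Rightarrow> real) \<Rightarrow> real"
  assumes z2: "z2 \<in> Delta" and bound: "\<And>x u. \<bar>ell t x u z1\<bar> \<le> B"
    and lip: "\<And>x u. \<bar>ell t x u z1 - ell t x u z2\<bar> \<le> K * supn (\<lambda>v. z1 v - z2 v)"
  shows "\<bar>chat ell t z1 \<gamma> - chat ell t z2 \<gamma>\<bar> \<le> (real CARD('x) * B + K) * supn (\<lambda>v. z1 v - z2 v)"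
proof -
  have "\<bar>chat ell t z1 \<gamma> - chat ell t z2 \<gamma>\<bar>
      \<le> real CARD('x) * supn (\<lambda>v. z1 v - z2 v) * B + K * supn (\<lambda>v. z1 v - z2 v)"
    unfolding chat_def by (rule abs_weighted_sum_diff_le[OF z2]) (auto intro: bound lip)
  then show ?thesis
    by (simp add: algebra_simps)
qed

lemma Enext_eq_iid_expect:
  "Enext f pw n t m \<gamma> g = iid_expect (pw t) {0..<n}
     (\<lambda>w. g (emp n (\<lambda>i. f t (states_of n m i) (\<gamma> (states_of n m i)) (w i) m)))"
  unfolding Enext_def iid_expect_def Let_def ..

lemma iid_expect_supn_emp_diff_fhat_le:
  fixes s :: "nat \<Rightarrow> 'x::finite" and f :: "nat \<Rightarrow> 'x \<Rightarrow> 'u \<Rightarrow> 'w::finite \<Rightarrow> ('x \<Rightarrow> real) \<Rightarrow> 'x"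
  assumes p0: "\<forall>w. 0 \<le> pw t w" and p1: "sum (pw t) UNIV = 1" and n: "0 < n" and m: "emp n s = m"
  shows "iid_expect (pw t) {0..<n}
      (\<lambda>w. supn (\<lambda>y. emp n (\<lambda>i. f t (s i) (\<gamma> (s i)) (w i) m) y - fhat f pw t m \<gamma> y))
    \<le> real CARD('x) / sqrt (real n)"
proof -
  define a :: "'x \<Rightarrow> nat \<Rightarrow> 'w \<Rightarrow> real"
    where "a y i v = of_bool (f t (s i) (\<gamma> (s i)) v m = y)" for y i v
  define dev where "dev y w = \<bar>\<Sum>i\<in>{0..<n}. a y i (w i) - (\<Sum>v\<in>UNIV. pw t v * a y i v)\<bar>" for y w
  have deviation: "emp n (\<lambda>i. f t (s i) (\<gamma> (s i)) (w i) m) y - fhat f pw t m \<gamma> y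
      = (\<Sum>i\<in>{0..<n}. a y i (w i) - (\<Sum>v\<in>UNIV. pw t v * a y i v)) / real n" for w y
  proof -
    have "emp n (\<lambda>i. f t (s i) (\<gamma> (s i)) (w i) m) y = (\<Sum>i\<in>{0..<n}. a y i (w i)) / real n"
      unfolding emp_def a_def by (simp add: Int_def)
    moreover have "(\<Sum>i\<in>{0..<n}. \<Sum>v\<in>UNIV. pw t v * a y i v)
        = (\<Sum>i\<in>{0..<n}. Ptrans f pw t (s i) (\<gamma> (s i)) m y)"
      unfolding a_def Ptrans_def of_bool_def by (simp add: mult.commute)
    moreover have "\<dots> = real n * fhat f pw t m \<gamma> y"
      using sum_agents_eq_emp[OF n, of "\<lambda>x. Ptrans f pw t x (\<gamma> x) m y" s] m
      unfolding fhat_def by simp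
    ultimately show ?thesis
      using n by (simp add: sum_subtractf diff_divide_distrib)
  qed
  have "supn (\<lambda>y. emp n (\<lambda>i. f t (s i) (\<gamma> (s i)) (w i) m) y - fhat f pw t m \<gamma> y)
      \<le> (\<Sum>y\<in>UNIV. 1 / real n * dev y w)" for w
    using supn_le_sum_abs[of "\<lambda>y. emp n (\<lambda>i. f t (s i) (\<gamma> (s i)) (w i) m) y - fhat f pw t m \<gamma> y"] n
    unfolding deviation dev_def by (simp add: abs_divide)
  then have "iid_expect (pw t) {0..<n}
      (\<lambda>w. supn (\<lambda>y. emp n (\<lambda>i. f t (s i) (\<gamma> (s i)) (w i) m) y - fhat f pw t m \<gamma> y))
    \<le> iid_expect (pw t) {0..<n} (\<lambda>w. \<Sum>y\<in>UNIV. 1 / real n * dev y w)"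
    by (rule iid_expect_mono[OF p0])
  also have "\<dots> = (\<Sum>y\<in>UNIV. 1 / real n * iid_expect (pw t) {0..<n} (dev y))"
    by (simp only: iid_expect_sum iid_expect_cmult)
  also have "\<dots> \<le> (\<Sum>y\<in>(UNIV::'x set). 1 / real n * sqrt (real n))"
    unfolding dev_def
    by (intro sum_mono mult_left_mono iid_expect_abs_centred_sum_le_sqrt_card[OF p0 p1, of "{0..<n}", simplified])
      (auto simp: a_def)
  also have "\<dots> = real CARD('x) / sqrt (real n)"
    using n by (simp add: field_simps real_sqrt_mult[symmetric])
  finally show ?thesis .
qed

definition supn_lipschitz_on :: "('x::finite \<Rightarrow> real) set \<Rightarrow> real \<Rightarrow> (('x \<Rightarrow> real) \<Rightarrow> real) \<Rightarrow> bool" where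
  "supn_lipschitz_on S L h \<longleftrightarrow> (\<forall>z1\<in>S. \<forall>z2\<in>S. \<bar>h z1 - h z2\<bar> \<le> L * supn (\<lambda>x. z1 x - z2 x))"

lemma abs_Enext_diff_le:
  fixes f :: "nat \<Rightarrow> 'x::finite \<Rightarrow> 'u \<Rightarrow> 'w::finite \<Rightarrow> ('x \<Rightarrow> real) \<Rightarrow> 'x"
  assumes p0: "\<forall>w. 0 \<le> pw t w" and p1: "sum (pw t) UNIV = 1" and n: "0 < n" and m: "m \<in> Mn n"
    and gap: "\<And>m'. m' \<in> Mn n \<Longrightarrow> \<bar>g m' - h m'\<bar> \<le> C / sqrt (real n)"
    and L: "0 \<le> L" "supn_lipschitz_on Delta L h"
  shows "\<bar>Enext f pw n t m \<gamma> g - h (fhat f pw t m \<gamma>)\<bar> \<le> (C + L * real CARD('x)) / sqrt (real n)"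
proof -
  define s where "s = states_of n m"
  define M where "M w = emp n (\<lambda>i. f t (s i) (\<gamma> (s i)) (w i) m)" for w
  have s: "emp n s = m"
    unfolding s_def by (rule emp_states_of[OF n m])
  have fhat_in: "fhat f pw t m \<gamma> \<in> Delta"
    using fhat_in_Delta[of pw t, OF p0 p1] m Mn_subset_Delta by blast
  have pointwise: "\<bar>g (M w) - h (fhat f pw t m \<gamma>)\<bar>
      \<le> C / sqrt (real n) + L * supn (\<lambda>y. M w y - fhat f pw t m \<gamma> y)" for w
  proof -
    have "M w \<in> Mn n"
      unfolding M_def by (rule emp_in_Mn[OF n])
    then have "\<bar>g (M w) - h (M w)\<bar> \<le> C / sqrt (real n)"
      and "\<bar>h (M w) - h (fhat f pw t m \<gamma>)\<bar> \<le> L * supn (\<lambda>y. M w y - fhat f pw t m \<gamma> y)"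
      using gap L(2) fhat_in Mn_subset_Delta unfolding supn_lipschitz_on_def by blast+
    then show ?thesis
      by linarith
  qed
  have "Enext f pw n t m \<gamma> g - h (fhat f pw t m \<gamma>)
      = iid_expect (pw t) {0..<n} (\<lambda>w. g (M w) - h (fhat f pw t m \<gamma>))"
    unfolding Enext_eq_iid_expect iid_expect_diff iid_expect_const[OF finite_atLeastLessThan p1]
      M_def s_def ..
  also have "\<bar>\<dots>\<bar> \<le> iid_expect (pw t) {0..<n} (\<lambda>w. \<bar>g (M w) - h (fhat f pw t m \<gamma>)\<bar>)"
    by (rule abs_iid_expect_le[OF p0])
  also have "\<dots> \<le> iid_expect (pw t) {0..<n}
      (\<lambda>w. C / sqrt (real n) + L * supn (\<lambda>y. M w y - fhat f pw t m \<gamma> y))"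
    by (rule iid_expect_mono[OF p0 pointwise])
  also have "\<dots> = C / sqrt (real n)
      + L * iid_expect (pw t) {0..<n} (\<lambda>w. supn (\<lambda>y. M w y - fhat f pw t m \<gamma> y))"
    by (simp only: iid_expect_add iid_expect_cmult iid_expect_const[OF finite_atLeastLessThan p1])
  also have "\<dots> \<le> C / sqrt (real n) + L * (real CARD('x) / sqrt (real n))"
    unfolding M_def
    by (intro add_left_mono mult_left_mono iid_expect_supn_emp_diff_fhat_le[of pw t, OF p0 p1 n s] L(1))
  also have "\<dots> = (C + L * real CARD('x)) / sqrt (real n)"
    by (simp add: add_divide_distrib)
  finally show ?thesis .
qed

section \<open>Backward induction\<close>

lemma abs_Min_range_diff_le:
  fixes F G :: "'a::finite \<Rightarrow> real"
  assumes "\<And>a. \<bar>F a - G a\<bar> \<le> e"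
  shows "\<bar>Min (range F) - Min (range G)\<bar> \<le> e"
proof -
  have "Min (range F) \<in> range F" "Min (range G) \<in> range G"
    by (rule Min_in; simp)+
  then obtain a b where a: "Min (range F) = F a" and b: "Min (range G) = G b"
    by blast
  have "Min (range G) \<le> G a" "Min (range F) \<le> F b"
    by (rule Min_le; simp)+
  then show ?thesis
    using assms[of a] assms[of b] a b by linarith
qed

locale mean_field_model =
  fixes T :: nat
    and f :: "nat \<Rightarrow> 'x::finite \<Rightarrow> 'u::finite \<Rightarrow> 'w::finite \<Rightarrow> ('x \<Rightarrow> real) \<Rightarrow> 'x"
    and pw :: "nat \<Rightarrow> 'w \<Rightarrow> real"
    and ell :: "nat \<Rightarrow> 'x \<Rightarrow> 'u \<Rightarrow> ('x \<Rightarrow> real) \<Rightarrow> real"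
    and K1 K2 :: "nat \<Rightarrow> real"
  assumes noise: "\<forall>t\<in>{1..T}. (\<forall>w. 0 \<le> pw t w) \<and> (\<Sum>w\<in>UNIV. pw t w) = 1"
    and cost_nonneg: "\<forall>t\<in>{1..T}. \<forall>x u z. z \<in> Ispace \<longrightarrow> 0 \<le> ell t x u z"
    and Lip: "\<forall>t\<in>{1..T}. 0 < K1 t \<and> 0 < K2 t \<and>
       (\<forall>x y u z1 z2. z1 \<in> Ispace \<longrightarrow> z2 \<in> Ispace \<longrightarrow>
          \<bar>Ptrans f pw t x u z1 y - Ptrans f pw t x u z2 y\<bar> \<le> K1 t * supn (\<lambda>v. z1 v - z2 v)) \<and>
       (\<forall>x u z1 z2. z1 \<in> Ispace \<longrightarrow> z2 \<in> Ispace \<longrightarrow>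
          \<bar>ell t x u z1 - ell t x u z2\<bar> \<le> K2 t * supn (\<lambda>v. z1 v - z2 v))"
begin

lemma noise_nonneg: "t \<in> {1..T} \<Longrightarrow> \<forall>w. 0 \<le> pw t w"
  and noise_sum: "t \<in> {1..T} \<Longrightarrow> sum (pw t) UNIV = 1"
  using noise by auto

lemma Ptrans_lipschitz:
  "t \<in> {1..T} \<Longrightarrow> z1 \<in> Ispace \<Longrightarrow> z2 \<in> Ispace \<Longrightarrow>
    \<bar>Ptrans f pw t x u z1 y - Ptrans f pw t x u z2 y\<bar> \<le> K1 t * supn (\<lambda>v. z1 v - z2 v)"
  using Lip by blast

lemma ell_lipschitz:
  "t \<in> {1..T} \<Longrightarrow> z1 \<in> Ispace \<Longrightarrow> z2 \<in> Ispace \<Longrightarrow>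
    \<bar>ell t x u z1 - ell t x u z2\<bar> \<le> K2 t * supn (\<lambda>v. z1 v - z2 v)"
  using Lip by blast

lemma ell_bounded:
  assumes t: "t \<in> {1..T}"
  obtains B where "0 \<le> B" "\<And>x u z. z \<in> Ispace \<Longrightarrow> \<bar>ell t x u z\<bar> \<le> B"
proof
  define B0 where "B0 = Max (range (\<lambda>(x, u). ell t x u (\<lambda>_. 0)))"
  have zero: "(\<lambda>_. 0) \<in> Ispace"
    unfolding Ispace_def by auto
  have nonneg: "0 \<le> ell t x u z" if "z \<in> Ispace" for x u z
    using cost_nonneg t that by blast
  have at_zero: "ell t x u (\<lambda>_. 0) \<le> B0" for x u
    unfolding B0_def by (auto intro!: Max_ge image_eqI[where x = "(x, u)"])
  have K2: "0 < K2 t"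
    using Lip t by blast
  show "0 \<le> B0 + K2 t"
    using nonneg[OF zero, of undefined undefined] at_zero[of undefined undefined] K2 by linarith
  fix x u and z :: "'x \<Rightarrow> real"
  assume z: "z \<in> Ispace"
  then have "supn (\<lambda>v. z v - 0) \<le> 1"
    unfolding Ispace_def by (intro supn_leI) auto
  then have "K2 t * supn (\<lambda>v. z v - 0) \<le> K2 t"
    using K2 by (simp add: mult_left_le)
  then show "\<bar>ell t x u z\<bar> \<le> B0 + K2 t"
    using ell_lipschitz[OF t z zero, of x u] at_zero[of x u] nonneg[OF z, of x u] by linarith
qed

lemma Bellman_lipschitz:
  assumes t: "t \<in> {1..T}" and B: "\<And>x u z. z \<in> Ispace \<Longrightarrow> \<bar>ell t x u z\<bar> \<le> B"
    and L: "0 \<le> L" "supn_lipschitz_on Delta L V"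
  shows "supn_lipschitz_on Delta (real CARD('x) * B + K2 t + L * (real CARD('x) + K1 t))
    (\<lambda>z. Min (range (\<lambda>\<gamma>. chat ell t z \<gamma> + V (fhat f pw t z \<gamma>))))"
  unfolding supn_lipschitz_on_def
proof (intro ballI abs_Min_range_diff_le)
  fix z1 z2 :: "'x \<Rightarrow> real" and \<gamma>
  assume z: "z1 \<in> Delta" "z2 \<in> Delta"
  then have zI: "z1 \<in> Ispace" "z2 \<in> Ispace"
    using Delta_subset_Ispace by blast+
  define d where "d = supn (\<lambda>x. z1 x - z2 x)"
  have "\<bar>chat ell t z1 \<gamma> - chat ell t z2 \<gamma>\<bar> \<le> (real CARD('x) * B + K2 t) * d"
    unfolding d_def by (rule abs_chat_diff_le[OF z(2)]) (auto intro: B ell_lipschitz t zI)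
  moreover have "\<bar>V (fhat f pw t z1 \<gamma>) - V (fhat f pw t z2 \<gamma>)\<bar> \<le> L * ((real CARD('x) + K1 t) * d)"
  proof -
    have "fhat f pw t z1 \<gamma> \<in> Delta" "fhat f pw t z2 \<gamma> \<in> Delta"
      using fhat_in_Delta[of pw t, OF noise_nonneg[OF t] noise_sum[OF t]] z by blast+
    then have "\<bar>V (fhat f pw t z1 \<gamma>) - V (fhat f pw t z2 \<gamma>)\<bar>
        \<le> L * supn (\<lambda>y. fhat f pw t z1 \<gamma> y - fhat f pw t z2 \<gamma> y)"
      using L(2) unfolding supn_lipschitz_on_def by blast
    also have "\<dots> \<le> L * ((real CARD('x) + K1 t) * d)"
      unfolding d_def using L(1)
      by (intro mult_left_mono supn_fhat_diff_le[of pw t, OF noise_nonneg[OF t] noise_sum[OF t] z(2)])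
        (auto intro: Ptrans_lipschitz t zI)
    finally show ?thesis .
  qed
  ultimately show "\<bar>(chat ell t z1 \<gamma> + V (fhat f pw t z1 \<gamma>)) - (chat ell t z2 \<gamma> + V (fhat f pw t z2 \<gamma>))\<bar>
      \<le> (real CARD('x) * B + K2 t + L * (real CARD('x) + K1 t)) * supn (\<lambda>x. z1 x - z2 x)"
    unfolding d_def by (simp add: algebra_simps)
qed

lemma VhatR_lipschitz:
  "1 \<le> t \<Longrightarrow> t + k \<le> Suc T \<Longrightarrow> \<exists>L\<ge>0. supn_lipschitz_on Delta L (VhatR f pw ell k t)"
proof (induction k arbitrary: t)
  case 0
  then show ?case
    by (auto simp: supn_lipschitz_on_def)
next
  case (Suc k)
  then have t: "t \<in> {1..T}"
    by auto
  obtain L where L: "0 \<le> L" "supn_lipschitz_on Delta L (VhatR f pw ell k (Suc t))"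
    using Suc.IH[of "Suc t"] Suc.prems by auto
  obtain B where "0 \<le> B" and B: "\<And>x u z. z \<in> Ispace \<Longrightarrow> \<bar>ell t x u z\<bar> \<le> B"
    using ell_bounded[OF t] by blast
  have "supn_lipschitz_on Delta (real CARD('x) * B + K2 t + L * (real CARD('x) + K1 t))
      (VhatR f pw ell (Suc k) t)"
    using Bellman_lipschitz[OF t B L] by (simp add: fun_eq_iff flip: VhatR.simps(2))
  moreover have "0 \<le> real CARD('x) * B + K2 t + L * (real CARD('x) + K1 t)"
    using \<open>0 \<le> B\<close> L(1) Lip t by (simp add: less_imp_le)
  ultimately show ?case
    by blast
qed

lemma VR_VhatR_gap:
  "1 \<le> t \<Longrightarrow> t + k \<le> Suc T \<Longrightarrow> \<exists>C. \<forall>n>0. \<forall>m\<in>Mn n.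
     \<bar>VR f pw ell n k t m - VhatR f pw ell k t m\<bar> \<le> C / sqrt (real n)"
proof (induction k arbitrary: t)
  case 0
  show ?case
    by (intro exI[of _ 0]) auto
next
  case (Suc k)
  then have t: "t \<in> {1..T}"
    by auto
  obtain C where C: "\<forall>n>0. \<forall>m\<in>Mn n.
      \<bar>VR f pw ell n k (Suc t) m - VhatR f pw ell k (Suc t) m\<bar> \<le> C / sqrt (real n)"
    using Suc.IH[of "Suc t"] Suc.prems by auto
  obtain L where L: "0 \<le> L" "supn_lipschitz_on Delta L (VhatR f pw ell k (Suc t))"
    using VhatR_lipschitz[of "Suc t" k] Suc.prems by auto
  have "\<bar>VR f pw ell n (Suc k) t m - VhatR f pw ell (Suc k) t m\<bar> \<le> (C + L * real CARD('x)) / sqrt (real n)"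
    if n: "0 < n" and m: "m \<in> Mn n" for n m
    unfolding VR.simps VhatR.simps
  proof (rule abs_Min_range_diff_le)
    fix \<gamma>
    have "\<bar>Enext f pw n t m \<gamma> (VR f pw ell n k (Suc t)) - VhatR f pw ell k (Suc t) (fhat f pw t m \<gamma>)\<bar>
        \<le> (C + L * real CARD('x)) / sqrt (real n)"
      by (rule abs_Enext_diff_le[of pw t, OF noise_nonneg[OF t] noise_sum[OF t] n m _ L]) (use C n in auto)
    then show "\<bar>(chat ell t m \<gamma> + Enext f pw n t m \<gamma> (VR f pw ell n k (Suc t)))
        - (chat ell t m \<gamma> + VhatR f pw ell k (Suc t) (fhat f pw t m \<gamma>))\<bar>
        \<le> (C + L * real CARD('x)) / sqrt (real n)"
      by simp
  qed
  then show ?case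
    by blast
qed

theorem Vmf_approx_Vhat:
  assumes t: "t \<in> {1..T}"
  shows "\<exists>K5>0. \<exists>C. \<forall>n>0. \<forall>m\<in>Mn n. \<forall>z\<in>Delta.
    \<bar>Vmf f pw ell T n t m - Vhat f pw ell T t z\<bar> \<le> K5 * supn (\<lambda>x. m x - z x) + C / sqrt (real n)"
proof -
  define k where "k = Suc T - t"
  have "1 \<le> t" "t + k \<le> Suc T"
    using t unfolding k_def by auto
  then obtain L C where L: "0 \<le> L" "supn_lipschitz_on Delta L (VhatR f pw ell k t)"
    and C: "\<forall>n>0. \<forall>m\<in>Mn n. \<bar>VR f pw ell n k t m - VhatR f pw ell k t m\<bar> \<le> C / sqrt (real n)"
    using VhatR_lipschitz VR_VhatR_gap by meson
  have "\<bar>Vmf f pw ell T n t m - Vhat f pw ell T t z\<bar>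
      \<le> (L + 1) * supn (\<lambda>x. m x - z x) + C / sqrt (real n)"
    if "0 < n" "m \<in> Mn n" "z \<in> Delta" for n m z
  proof -
    have "\<bar>VR f pw ell n k t m - VhatR f pw ell k t m\<bar> \<le> C / sqrt (real n)"
      using C that by blast
    moreover have "\<bar>VhatR f pw ell k t m - VhatR f pw ell k t z\<bar> \<le> L * supn (\<lambda>x. m x - z x)"
      using L(2) that Mn_subset_Delta unfolding supn_lipschitz_on_def by blast
    moreover have "L * supn (\<lambda>x. m x - z x) \<le> (L + 1) * supn (\<lambda>x. m x - z x)"
      using supn_nonneg[of "\<lambda>x. m x - z x"] by (simp add: distrib_right)
    ultimately show ?thesis
      unfolding Vmf_def Vhat_def k_def by linarith
  qed
  moreover have "0 < L + 1"
    using L(1) by simp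
  ultimately show ?thesis
    by blast
qed

end

theorem lemma6:
  fixes T :: nat
    and f :: "nat \<Rightarrow> 'x::finite \<Rightarrow> 'u::finite \<Rightarrow> 'w::finite \<Rightarrow> ('x \<Rightarrow> real) \<Rightarrow> 'x"
    and pw :: "nat \<Rightarrow> 'w \<Rightarrow> real"
    and ell :: "nat \<Rightarrow> 'x \<Rightarrow> 'u \<Rightarrow> ('x \<Rightarrow> real) \<Rightarrow> real"
    and K1 K2 :: "nat \<Rightarrow> real"
  assumes noise: "\<forall>t\<in>{1..T}. (\<forall>w. 0 \<le> pw t w) \<and> (\<Sum>w\<in>UNIV. pw t w) = 1"
    and cost_nonneg: "\<forall>t\<in>{1..T}. \<forall>x u z. z \<in> Ispace \<longrightarrow> 0 \<le> ell t x u z"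
    and Lip: "\<forall>t\<in>{1..T}. 0 < K1 t \<and> 0 < K2 t \<and>
       (\<forall>x y u z1 z2. z1 \<in> Ispace \<longrightarrow> z2 \<in> Ispace \<longrightarrow>
          \<bar>Ptrans f pw t x u z1 y - Ptrans f pw t x u z2 y\<bar> \<le> K1 t * supn (\<lambda>v. z1 v - z2 v)) \<and>
       (\<forall>x u z1 z2. z1 \<in> Ispace \<longrightarrow> z2 \<in> Ispace \<longrightarrow>
          \<bar>ell t x u z1 - ell t x u z2\<bar> \<le> K2 t * supn (\<lambda>v. z1 v - z2 v))"
  shows "\<forall>t\<in>{1..T}. \<exists>K5>0. \<exists>C. \<forall>n::nat. 0 < n \<longrightarrow>
           (\<forall>m\<in>Mn n. \<forall>z\<in>Delta.
              \<bar>Vmf f pw ell T n t m - Vhat f pw ell T t z\<bar>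
                \<le> K5 * supn (\<lambda>x. m x - z x) + C / sqrt (real n))"
proof -
  interpret mean_field_model T f pw ell K1 K2
    by (rule mean_field_model.intro[OF noise cost_nonneg Lip])
  show ?thesis
    using Vmf_approx_Vhat by blast
qed

end
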